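(* Let $\lambda_1<\dots<\lambda_n$ be real numbers, $I=[a,b]$ with $a<b$, and for $\alpha>0$ and $1\le j<n$ let $J_j(\alpha)=\{x\in\mathbb{R}:[x,x+\alpha]\subset(\lambda_j,\lambda_{j+1})\}$. Let $\Lambda(I)=\{i:\lambda_i,\lambda_{i+1}\in I\}$ and for $a_1,\dots,a_k>0$ let $$\Sigma_k(a_1,\dots,a_k)=\bigcup_{i_1,\dots,i_k\in\Lambda(I)\text{ all distinct}}\ \prod_{j=1}^kJ_{i_j}(a_j).$$ Then for $(y_1,\dots,y_k)\in(a,b)^k$, $(y_1,\dots,y_k)\in\Sigma_k(a_1,\dots,a_k)$ holds if and only if: (i) $[y_l,y_l+a_l]\cap[y_j,y_j+a_j]=\emptyset$ for $1\le l<j\le k$; (ii) $\lambda_l\notin[y_j,y_j+a_j]$ for all $1\le j\le k$, $1\le l\le n$; (iii) writing $y_0=a$, $y_{k+1}=b$, $\{\lambda_1,\dots,\lambda_n\}\cap[y_p,y_q]\neq\emptyset$ for all $p,q\in\{0,\dots,k+1\}$ with $y_p<y_q$. *)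

theory Defs
  imports Complex_Main
begin

text \<open>The points lambda_1 < ... < lambda_n are given as a function lam :: nat => real,
  only the values at 1..n being relevant.\<close>

definition Jset :: "(nat \<Rightarrow> real) \<Rightarrow> nat \<Rightarrow> real \<Rightarrow> real set" where
  "Jset lam j \<alpha> = {x. {x..x+\<alpha>} \<subseteq> {lam j<..<lam (Suc j)}}"

definition Lam :: "(nat \<Rightarrow> real) \<Rightarrow> nat \<Rightarrow> real \<Rightarrow> real \<Rightarrow> nat set" where
  "Lam lam n a b = {i. 1 \<le> i \<and> i < n \<and> lam i \<in> {a..b} \<and> lam (Suc i) \<in> {a..b}}"

text \<open>Sigma_k(a_1,...,a_k): k-tuples are represented as functions nat => real whose
  values at 1..k are the coordinates.\<close>

definition Sigma_k :: "(nat \<Rightarrow> real) \<Rightarrow> nat \<Rightarrow> real \<Rightarrow> real \<Rightarrow> nat \<Rightarrow> (nat \<Rightarrow> real)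
    \<Rightarrow> (nat \<Rightarrow> real) set" where
  "Sigma_k lam n a b k \<alpha> = {y. \<exists>i::nat \<Rightarrow> nat. inj_on i {1..k} \<and>
      (\<forall>j\<in>{1..k}. i j \<in> Lam lam n a b \<and> y j \<in> Jset lam (i j) (\<alpha> j))}"

end

theory Submission
  imports Defs
begin

text \<open>A coordinate \<open>y\<^sub>j\<close> lies in \<open>J\<^sub>i(a\<^sub>j)\<close> for some \<open>i \<in> \<Lambda>(I)\<close> iff
  \<open>[y\<^sub>j, y\<^sub>j + a\<^sub>j]\<close> contains no \<open>\<lambda>\<^sub>l\<close> (condition (ii)) while \<open>[a, y\<^sub>j]\<close> and \<open>[y\<^sub>j, b]\<close>
  both contain one (the instances of (iii) involving an endpoint); the gap is the one right
  after the last \<open>\<lambda>\<^sub>l\<close> below \<open>y\<^sub>j\<close>. Two coordinates \<open>y\<^sub>p < y\<^sub>q\<close> lie in the same gap iff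
  no \<open>\<lambda>\<^sub>l\<close> lies in \<open>[y\<^sub>p, y\<^sub>q]\<close>, so distinctness of the gap indices is (iii) for
  interior pairs, and intervals placed in distinct gaps are disjoint, which gives (i).\<close>

lemma Jset_iff:
  assumes "\<alpha> \<ge> 0"
  shows "x \<in> Jset lam i \<alpha> \<longleftrightarrow> lam i < x \<and> x + \<alpha> < lam (Suc i)"
  using assms unfolding Jset_def by (auto simp: subset_eq)

lemma Lam_subset: "Lam lam n a b \<subseteq> {1..<n}"
  unfolding Lam_def by auto

lemma strict_mono_on_not_in_gap:
  fixes lam :: "nat \<Rightarrow> real"
  assumes mono: "strict_mono_on {1..n} lam" and i: "i \<in> {1..<n}" and l: "l \<in> {1..n}"
  shows "lam l \<notin> {lam i<..<lam (Suc i)}"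
proof (cases "l \<le> i")
  case True
  then show ?thesis using strict_mono_on_leD[OF mono, of l i] i l by auto
next
  case False
  then show ?thesis using strict_mono_on_leD[OF mono, of "Suc i" l] i l by auto
qed

lemma Jset_before_Jset:
  fixes lam :: "nat \<Rightarrow> real"
  assumes mono: "strict_mono_on {1..n} lam" and ij: "i < j" "1 \<le> i" "j < n"
    and x: "x \<in> Jset lam i \<alpha>" and x': "x' \<in> Jset lam j \<beta>" and "\<alpha> \<ge> 0" "\<beta> \<ge> 0"
  shows "x + \<alpha> < x'"
proof -
  have "lam (Suc i) \<le> lam j" using strict_mono_on_leD[OF mono, of "Suc i" j] ij by auto
  then show ?thesis using x x' assms by (auto simp: Jset_iff)
qed

lemma image_meets_between_Jset_iff:
  fixes lam :: "nat \<Rightarrow> real"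
  assumes mono: "strict_mono_on {1..n} lam" and ij: "i \<in> {1..<n}" "j \<in> {1..<n}"
    and x: "x \<in> Jset lam i \<alpha>" and x': "x' \<in> Jset lam j \<beta>" and "\<alpha> \<ge> 0" "\<beta> \<ge> 0"
    and "x < x'"
  shows "lam ` {1..n} \<inter> {x..x'} \<noteq> {} \<longleftrightarrow> i \<noteq> j"
proof (cases i j rule: linorder_cases)
  case less
  then have "lam (Suc i) \<le> lam j" using strict_mono_on_leD[OF mono, of "Suc i" j] ij by auto
  then have "lam (Suc i) \<in> lam ` {1..n} \<inter> {x..x'}" using x x' assms ij by (auto simp: Jset_iff)
  then show ?thesis using less by blast
next
  case equal
  have "{x..x'} \<subseteq> {lam i<..<lam (Suc i)}" using x x' equal assms by (auto simp: Jset_iff)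
  then show ?thesis using strict_mono_on_not_in_gap[OF mono ij(1)] equal by blast
next
  case greater
  then show ?thesis using Jset_before_Jset[OF mono greater _ _ x' x] assms ij by auto
qed

lemma ex_Lam_Jset_iff:
  fixes lam :: "nat \<Rightarrow> real"
  assumes mono: "strict_mono_on {1..n} lam" and "\<alpha> > 0"
  shows "(\<exists>i\<in>Lam lam n a b. x \<in> Jset lam i \<alpha>) \<longleftrightarrow>
    lam ` {1..n} \<inter> {a..x} \<noteq> {} \<and> lam ` {1..n} \<inter> {x..b} \<noteq> {} \<and>
    (\<forall>l\<in>{1..n}. lam l \<notin> {x..x + \<alpha>})"
proof
  assume "\<exists>i\<in>Lam lam n a b. x \<in> Jset lam i \<alpha>"
  then obtain i where i: "i \<in> {1..<n}" "lam i \<in> {a..b}" "lam (Suc i) \<in> {a..b}"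
    and x: "lam i < x" "x + \<alpha> < lam (Suc i)"
    using \<open>\<alpha> > 0\<close> unfolding Lam_def by (auto simp: Jset_iff)
  have "lam i \<in> lam ` {1..n} \<inter> {a..x}" "lam (Suc i) \<in> lam ` {1..n} \<inter> {x..b}"
    using i x \<open>\<alpha> > 0\<close> by auto
  moreover have "lam l \<notin> {x..x + \<alpha>}" if "l \<in> {1..n}" for l
    using strict_mono_on_not_in_gap[OF mono i(1) that] x by auto
  ultimately show "lam ` {1..n} \<inter> {a..x} \<noteq> {} \<and> lam ` {1..n} \<inter> {x..b} \<noteq> {} \<and>
    (\<forall>l\<in>{1..n}. lam l \<notin> {x..x + \<alpha>})" by blast
next
  assume "lam ` {1..n} \<inter> {a..x} \<noteq> {} \<and> lam ` {1..n} \<inter> {x..b} \<noteq> {} \<and>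
    (\<forall>l\<in>{1..n}. lam l \<notin> {x..x + \<alpha>})"
  then obtain l m where l: "l \<in> {1..n}" "lam l \<in> {a..x}"
    and m: "m \<in> {1..n}" "lam m \<in> {x..b}"
    and avoid: "\<And>l. l \<in> {1..n} \<Longrightarrow> lam l \<notin> {x..x + \<alpha>}"
    by blast
  define S where "S = {l \<in> {1..n}. lam l < x}"
  define i where "i = Max S"
  have "finite S" unfolding S_def by simp
  have "l \<in> S" using l avoid[OF l(1)] \<open>\<alpha> > 0\<close> unfolding S_def by force
  then have "i \<in> S" "l \<le> i" unfolding i_def using Max_in Max_ge \<open>finite S\<close> by blast+
  have "Suc i \<notin> S" using Max_ge[OF \<open>finite S\<close>, of "Suc i"] unfolding i_def by auto
  have "i < m"
    using strict_mono_on_less_eq[OF mono] \<open>i \<in> S\<close> m unfolding S_def by force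
  then have "x + \<alpha> < lam (Suc i)"
    using \<open>Suc i \<notin> S\<close> avoid[of "Suc i"] \<open>i \<in> S\<close> m unfolding S_def by fastforce
  moreover have "a \<le> lam i" "lam (Suc i) \<le> b"
    using strict_mono_on_leD[OF mono, of l i] strict_mono_on_leD[OF mono, of "Suc i" m]
      \<open>i \<in> S\<close> \<open>l \<le> i\<close> \<open>i < m\<close> l m unfolding S_def by auto
  ultimately have "i \<in> Lam lam n a b" "x \<in> Jset lam i \<alpha>"
    using \<open>i \<in> S\<close> \<open>i < m\<close> m \<open>\<alpha> > 0\<close> unfolding S_def Lam_def by (auto simp: Jset_iff)
  then show "\<exists>i\<in>Lam lam n a b. x \<in> Jset lam i \<alpha>" by blast
qed

lemma mem_Sigma_kD:
  fixes lam :: "nat \<Rightarrow> real"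
  assumes mono: "strict_mono_on {1..n} lam" and apos: "\<And>j. j \<in> {1..k} \<Longrightarrow> \<alpha> j > 0"
    and "y \<in> Sigma_k lam n a b k \<alpha>"
  shows "\<forall>l\<in>{1..k}. \<forall>j\<in>{1..k}. l < j \<longrightarrow> {y l..y l + \<alpha> l} \<inter> {y j..y j + \<alpha> j} = {}"
    and "\<forall>j\<in>{1..k}. \<forall>l\<in>{1..n}. lam l \<notin> {y j..y j + \<alpha> j}"
    and "\<forall>j\<in>{1..k}. lam ` {1..n} \<inter> {a..y j} \<noteq> {} \<and> lam ` {1..n} \<inter> {y j..b} \<noteq> {}"
    and "\<forall>p\<in>{1..k}. \<forall>q\<in>{1..k}. y p < y q \<longrightarrow> lam ` {1..n} \<inter> {y p..y q} \<noteq> {}"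
proof -
  obtain i where inj: "inj_on i {1..k}"
    and i: "\<And>j. j \<in> {1..k} \<Longrightarrow> i j \<in> Lam lam n a b \<and> y j \<in> Jset lam (i j) (\<alpha> j)"
    using \<open>y \<in> Sigma_k lam n a b k \<alpha>\<close> unfolding Sigma_k_def by blast
  have gap: "i j \<in> {1..<n}" and J: "y j \<in> Jset lam (i j) (\<alpha> j)" and nonneg: "\<alpha> j \<ge> 0"
    if "j \<in> {1..k}" for j
    using i[OF that] apos[OF that] Lam_subset[of lam n a b] by auto
  have coordinate: "lam ` {1..n} \<inter> {a..y j} \<noteq> {} \<and> lam ` {1..n} \<inter> {y j..b} \<noteq> {} \<and>
      (\<forall>l\<in>{1..n}. lam l \<notin> {y j..y j + \<alpha> j})" if "j \<in> {1..k}" for j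
    by (rule iffD1[OF ex_Lam_Jset_iff[OF mono apos[OF that]]]) (use i[OF that] in blast)
  then show "\<forall>j\<in>{1..k}. \<forall>l\<in>{1..n}. lam l \<notin> {y j..y j + \<alpha> j}"
    and "\<forall>j\<in>{1..k}. lam ` {1..n} \<inter> {a..y j} \<noteq> {} \<and> lam ` {1..n} \<inter> {y j..b} \<noteq> {}"
    by simp_all
  show "\<forall>l\<in>{1..k}. \<forall>j\<in>{1..k}. l < j \<longrightarrow> {y l..y l + \<alpha> l} \<inter> {y j..y j + \<alpha> j} = {}"
  proof (intro ballI impI)
    fix l j assume l: "l \<in> {1..k}" and j: "j \<in> {1..k}" and "l < j"
    then have "i l < i j \<or> i j < i l" using inj by (metis inj_onD less_irrefl linorder_neqE_nat)
    then have "y l + \<alpha> l < y j \<or> y j + \<alpha> j < y l"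
      using Jset_before_Jset[OF mono, of "i l" "i j" "y l" "\<alpha> l" "y j" "\<alpha> j"]
        Jset_before_Jset[OF mono, of "i j" "i l" "y j" "\<alpha> j" "y l" "\<alpha> l"]
        gap[OF l] gap[OF j] J[OF l] J[OF j] nonneg[OF l] nonneg[OF j] by fastforce
    then show "{y l..y l + \<alpha> l} \<inter> {y j..y j + \<alpha> j} = {}" by auto
  qed
  show "\<forall>p\<in>{1..k}. \<forall>q\<in>{1..k}. y p < y q \<longrightarrow> lam ` {1..n} \<inter> {y p..y q} \<noteq> {}"
  proof (intro ballI impI)
    fix p q assume p: "p \<in> {1..k}" and q: "q \<in> {1..k}" and "y p < y q"
    then have "i p \<noteq> i q" using inj by (metis inj_onD less_irrefl)
    then show "lam ` {1..n} \<inter> {y p..y q} \<noteq> {}"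
      using image_meets_between_Jset_iff[OF mono gap[OF p] gap[OF q] J[OF p] J[OF q]
          nonneg[OF p] nonneg[OF q] \<open>y p < y q\<close>] by blast
  qed
qed

lemma mem_Sigma_kI:
  fixes lam :: "nat \<Rightarrow> real"
  assumes mono: "strict_mono_on {1..n} lam" and apos: "\<And>j. j \<in> {1..k} \<Longrightarrow> \<alpha> j > 0"
    and disjoint: "\<forall>l\<in>{1..k}. \<forall>j\<in>{1..k}. l < j \<longrightarrow> {y l..y l + \<alpha> l} \<inter> {y j..y j + \<alpha> j} = {}"
    and avoid: "\<forall>j\<in>{1..k}. \<forall>l\<in>{1..n}. lam l \<notin> {y j..y j + \<alpha> j}"
    and ends: "\<forall>j\<in>{1..k}. lam ` {1..n} \<inter> {a..y j} \<noteq> {} \<and> lam ` {1..n} \<inter> {y j..b} \<noteq> {}"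
    and between: "\<forall>p\<in>{1..k}. \<forall>q\<in>{1..k}. y p < y q \<longrightarrow> lam ` {1..n} \<inter> {y p..y q} \<noteq> {}"
  shows "y \<in> Sigma_k lam n a b k \<alpha>"
proof -
  have "\<exists>i\<in>Lam lam n a b. y j \<in> Jset lam i (\<alpha> j)" if "j \<in> {1..k}" for j
    using ex_Lam_Jset_iff[OF mono apos[OF that]] avoid ends that by simp
  then obtain i where i: "\<And>j. j \<in> {1..k} \<Longrightarrow> i j \<in> Lam lam n a b \<and> y j \<in> Jset lam (i j) (\<alpha> j)"
    by metis
  have gap: "i j \<in> {1..<n}" and J: "y j \<in> Jset lam (i j) (\<alpha> j)" and nonneg: "\<alpha> j \<ge> 0"
    if "j \<in> {1..k}" for j
    using i[OF that] apos[OF that] Lam_subset[of lam n a b] by auto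
  have distinct: "i p \<noteq> i q" if p: "p \<in> {1..k}" and q: "q \<in> {1..k}" and "y p < y q" for p q
    using image_meets_between_Jset_iff[OF mono gap[OF p] gap[OF q] J[OF p] J[OF q]
        nonneg[OF p] nonneg[OF q] \<open>y p < y q\<close>] between p q \<open>y p < y q\<close> by blast
  have "inj_on i {1..k}"
  proof (rule inj_onI, rule ccontr)
    fix p q assume p: "p \<in> {1..k}" and q: "q \<in> {1..k}" and "i p = i q" "p \<noteq> q"
    have "y p \<noteq> y q"
    proof
      assume "y p = y q"
      then have "y p \<in> {y p..y p + \<alpha> p}" "y p \<in> {y q..y q + \<alpha> q}"
        using apos[OF p] apos[OF q] by auto
      moreover consider "p < q" | "q < p" using \<open>p \<noteq> q\<close> by arith
      ultimately show False using disjoint p q by cases blast+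
    qed
    then show False
      using distinct[OF p q] distinct[OF q p] \<open>i p = i q\<close> by fastforce
  qed
  then show ?thesis unfolding Sigma_k_def using i by blast
qed

lemma mem_Sigma_k_iff:
  fixes lam :: "nat \<Rightarrow> real"
  assumes mono: "strict_mono_on {1..n} lam" and apos: "\<And>j. j \<in> {1..k} \<Longrightarrow> \<alpha> j > 0"
  shows "y \<in> Sigma_k lam n a b k \<alpha> \<longleftrightarrow>
    (\<forall>l\<in>{1..k}. \<forall>j\<in>{1..k}. l < j \<longrightarrow> {y l..y l + \<alpha> l} \<inter> {y j..y j + \<alpha> j} = {}) \<and>
    (\<forall>j\<in>{1..k}. \<forall>l\<in>{1..n}. lam l \<notin> {y j..y j + \<alpha> j}) \<and>
    (\<forall>j\<in>{1..k}. lam ` {1..n} \<inter> {a..y j} \<noteq> {} \<and> lam ` {1..n} \<inter> {y j..b} \<noteq> {}) \<and>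
    (\<forall>p\<in>{1..k}. \<forall>q\<in>{1..k}. y p < y q \<longrightarrow> lam ` {1..n} \<inter> {y p..y q} \<noteq> {})"
  (is "_ \<longleftrightarrow> ?disjoint \<and> ?avoid \<and> ?ends \<and> ?between")
proof
  assume y: "y \<in> Sigma_k lam n a b k \<alpha>"
  show "?disjoint \<and> ?avoid \<and> ?ends \<and> ?between"
  proof (intro conjI)
    show ?disjoint using mono apos y by (rule mem_Sigma_kD(1))
    show ?avoid using mono apos y by (rule mem_Sigma_kD(2))
    show ?ends using mono apos y by (rule mem_Sigma_kD(3))
    show ?between using mono apos y by (rule mem_Sigma_kD(4))
  qed
next
  assume "?disjoint \<and> ?avoid \<and> ?ends \<and> ?between"
  then show "y \<in> Sigma_k lam n a b k \<alpha>"
    using mono apos by (elim conjE) (rule mem_Sigma_kI)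
qed

lemma meets_between_extended_iff:
  fixes S :: "real set" and y :: "nat \<Rightarrow> real"
  assumes k: "k \<ge> 1" and yin: "\<And>j. j \<in> {1..k} \<Longrightarrow> y j \<in> {a<..<b}"
  shows "(let y' = (\<lambda>p. if p = 0 then a else if p = k + 1 then b else y p) in
      \<forall>p\<in>{0..k+1}. \<forall>q\<in>{0..k+1}. y' p < y' q \<longrightarrow> S \<inter> {y' p..y' q} \<noteq> {}) \<longleftrightarrow>
    (\<forall>j\<in>{1..k}. S \<inter> {a..y j} \<noteq> {} \<and> S \<inter> {y j..b} \<noteq> {}) \<and>
    (\<forall>p\<in>{1..k}. \<forall>q\<in>{1..k}. y p < y q \<longrightarrow> S \<inter> {y p..y q} \<noteq> {})"
    (is "_ \<longleftrightarrow> ?ends \<and> ?inner")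
proof -
  define y' where "y' = (\<lambda>p. if p = 0 then a else if p = k + 1 then b else y p)"
  have y'_ends: "y' 0 = a" "y' (k + 1) = b" and y'_inner: "\<And>j. j \<in> {1..k} \<Longrightarrow> y' j = y j"
    unfolding y'_def by auto
  have "a < b" using yin[of 1] k by auto
  have y'_range: "y' p \<in> {a..b}" if "p \<in> {0..k+1}" for p
    using yin[of p] \<open>a < b\<close> that unfolding y'_def by (auto simp: less_imp_le)
  have index_cases: "p = 0 \<or> p = k + 1 \<or> p \<in> {1..k}" if "p \<in> {0..k+1}" for p
    using that by auto
  have "(\<forall>p\<in>{0..k+1}. \<forall>q\<in>{0..k+1}. y' p < y' q \<longrightarrow> S \<inter> {y' p..y' q} \<noteq> {}) \<longleftrightarrow>
      ?ends \<and> ?inner"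
  proof
    assume ext: "\<forall>p\<in>{0..k+1}. \<forall>q\<in>{0..k+1}. y' p < y' q \<longrightarrow> S \<inter> {y' p..y' q} \<noteq> {}"
    have ?ends
    proof
      fix j assume j: "j \<in> {1..k}"
      show "S \<inter> {a..y j} \<noteq> {} \<and> S \<inter> {y j..b} \<noteq> {}"
        using ext[rule_format, of 0 j] ext[rule_format, of j "k + 1"] yin[OF j] j y'_ends y'_inner[OF j]
        by auto
    qed
    moreover have ?inner
    proof (intro ballI impI)
      fix p q assume "p \<in> {1..k}" "q \<in> {1..k}" "y p < y q"
      then show "S \<inter> {y p..y q} \<noteq> {}"
        using ext[rule_format, of p q] y'_inner by simp
    qed
    ultimately show "?ends \<and> ?inner" ..
  next
    assume "?ends \<and> ?inner"
    then have ends: ?ends and inner: ?inner by blast+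
    show "\<forall>p\<in>{0..k+1}. \<forall>q\<in>{0..k+1}. y' p < y' q \<longrightarrow> S \<inter> {y' p..y' q} \<noteq> {}"
    proof (intro ballI impI)
      fix p q assume p: "p \<in> {0..k+1}" and q: "q \<in> {0..k+1}" and "y' p < y' q"
      have "p \<noteq> k + 1" "q \<noteq> 0"
        using y'_range[OF p] y'_range[OF q] y'_ends \<open>y' p < y' q\<close> by (metis atLeastAtMost_iff not_le)+
      moreover have "S \<inter> {a..b} \<noteq> {}"
        using ends[rule_format, of 1] k yin[of 1] by fastforce
      ultimately show "S \<inter> {y' p..y' q} \<noteq> {}"
        using index_cases[OF p] index_cases[OF q] ends inner y'_ends y'_inner \<open>y' p < y' q\<close> by auto
    qed
  qed
  then show ?thesis unfolding y'_def Let_def .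
qed

theorem lemma11:
  fixes lam :: "nat \<Rightarrow> real" and n k :: nat and a b :: real
    and \<alpha> y :: "nat \<Rightarrow> real"
  assumes mono: "\<And>i j. 1 \<le> i \<Longrightarrow> i < j \<Longrightarrow> j \<le> n \<Longrightarrow> lam i < lam j"
    and ab: "a < b"
    and k: "k \<ge> 1"
    and apos: "\<And>j. j \<in> {1..k} \<Longrightarrow> \<alpha> j > 0"
    and yin: "\<And>j. j \<in> {1..k} \<Longrightarrow> y j \<in> {a<..<b}"
  shows "y \<in> Sigma_k lam n a b k \<alpha> \<longleftrightarrow>
     ((\<forall>l\<in>{1..k}. \<forall>j\<in>{1..k}. l < j \<longrightarrow> {y l..y l + \<alpha> l} \<inter> {y j..y j + \<alpha> j} = {}) \<and>
      (\<forall>j\<in>{1..k}. \<forall>l\<in>{1..n}. lam l \<notin> {y j..y j + \<alpha> j}) \<and>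
      (let y' = (\<lambda>p. if p = 0 then a else if p = k + 1 then b else y p) in
        \<forall>p\<in>{0..k+1}. \<forall>q\<in>{0..k+1}. y' p < y' q \<longrightarrow>
          lam ` {1..n} \<inter> {y' p..y' q} \<noteq> {}))"
proof -
  have "strict_mono_on {1..n} lam"
    using mono by (intro strict_mono_onI) auto
  then show ?thesis
    using mem_Sigma_k_iff[OF _ apos] meets_between_extended_iff[OF k yin] by (simp only:)
qed

end
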